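(* Let $G\in\mathrm{C}^1(\mathbb{R})$ be coercive and $V\in\mathrm{Lip}(\mathbb{R})$ be $1$-periodic. For all $\theta_1,\theta_2\in\mathbb{R}$ with $\theta_1<\theta_2$, the function $g_{\theta_1,\theta_2}=f_{\theta_2}-f_{\theta_1}$ satisfies $$(\theta_2-\theta_1)e^{-K_1(\theta_1,\theta_2)}\le g_{\theta_1,\theta_2}(x)\le(\theta_2-\theta_1)e^{K_1(\theta_1,\theta_2)}\quad\text{for all }x\in\mathbb{R},$$ where $K_1(\theta_1,\theta_2)=\max\{|G'(p)|:\,\min_{x\in[0,1]}f_{\theta_1}(x)\le p\le\max_{x\in[0,1]}f_{\theta_2}(x)\}$.
   Context: $G$ coercive means $G(p)\to\infty$ as $p\to\pm\infty$. For each $\theta\in\mathbb{R}$, $f_\theta\in\mathrm{C}^1(\mathbb{R})$ denotes the unique $1$-periodic function such that $\int_0^1 f_\theta(x)dx=\theta$ and, for some (unique) constant $\overline{H}(\theta)\in\mathbb{R}$, $f_\theta'(x)+G(f_\theta(x))+V(x)=\overline{H}(\theta)$ for all $x\in\mathbb{R}$. *)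

theory Defs
  imports "HOL-Analysis.Analysis"
begin

definition K1 :: "(real \<Rightarrow> real) \<Rightarrow> (real \<Rightarrow> real \<Rightarrow> real) \<Rightarrow> real \<Rightarrow> real \<Rightarrow> real" where
  "K1 G' f \<theta>1 \<theta>2 =
     Sup ((\<lambda>p. \<bar>G' p\<bar>) ` {Inf (f \<theta>1 ` {0..1}) .. Sup (f \<theta>2 ` {0..1})})"

end

theory Submission
  imports Defs "HOL-Library.Periodic_Fun"
begin

(* The difference g = f_theta2 - f_theta1 is 1-periodic with mean theta2 - theta1, and
   g' = c - (G (f_theta2) - G (f_theta1)) with the constant c = Hbar theta2 - Hbar theta1; by the
   mean value theorem the bracket is at most K |g| in absolute value. Hence g' >= -K g if c >= 0
   and g' <= K g if c <= 0, so g e^(K x) (resp. g e^(-K x)) is monotone wherever g >= 0. Thus g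
   cannot change sign, and comparing two points at most one period apart gives the Harnack
   inequality g x <= g z e^K; for z take a point where g equals its mean.
   K1 bounds G' at the values of f_theta1 and f_theta2 only once f_theta1 < f_theta2 is known, so
   positivity is first proved with a cruder constant. Only the equation, the periodicity and the
   means of f_theta enter; the remaining hypotheses serve the existence of f_theta. *)

lemma mean_value_integral:
  fixes g :: "real \<Rightarrow> real"
  assumes "a \<le> b" "continuous_on {a..b} g"
  shows "\<exists>\<xi>\<in>{a..b}. integral {a..b} g = (b - a) * g \<xi>"
proof (cases "a = b")
  case True
  then show ?thesis by auto
next
  case False
  then have ab: "a < b" using assms(1) by simp
  obtain m where m: "m \<in> {a..b}" "\<And>x. x \<in> {a..b} \<Longrightarrow> g m \<le> g x"
    using continuous_attains_inf[OF compact_Icc _ assms(2)] assms(1) by auto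
  obtain M where M: "M \<in> {a..b}" "\<And>x. x \<in> {a..b} \<Longrightarrow> g x \<le> g M"
    using continuous_attains_sup[OF compact_Icc _ assms(2)] assms(1) by auto
  have g_int: "g integrable_on {a..b}"
    using assms(2) by (rule integrable_continuous_interval)
  have "(b - a) * g m \<le> integral {a..b} g" "integral {a..b} g \<le> (b - a) * g M"
    using integral_le[OF integrable_on_const g_int, of "g m"] m(2)
      integral_le[OF g_int integrable_on_const, of "g M"] M(2) ab
    by (auto simp: mult.commute)
  then have "integral {a..b} g / (b - a) \<in> {g m..g M}"
    using ab by (simp add: field_simps)
  also have "{g m..g M} \<subseteq> g ` {a..b}"
    by (intro connected_contains_Icc connected_continuous_image assms(2)) (use m M in auto)
  finally obtain \<xi> where "\<xi> \<in> {a..b}" "integral {a..b} g / (b - a) = g \<xi>" by auto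
  then show ?thesis using ab by (auto simp: field_simps)
qed

lemma abs_diff_le_Sup_abs_deriv:
  fixes G G' :: "real \<Rightarrow> real"
  assumes G_deriv: "\<And>p. (G has_real_derivative G' p) (at p)"
    and G'_cont: "continuous_on {a..b} G'"
    and "u \<in> {a..b}" "v \<in> {a..b}"
  shows "\<bar>G v - G u\<bar> \<le> Sup ((\<lambda>p. \<bar>G' p\<bar>) ` {a..b}) * \<bar>v - u\<bar>"
proof -
  have "bdd_above ((\<lambda>p. \<bar>G' p\<bar>) ` {a..b})"
    by (intro bounded_imp_bdd_above compact_imp_bounded compact_continuous_image
        continuous_intros G'_cont compact_Icc)
  then have G'_le: "\<bar>G' p\<bar> \<le> Sup ((\<lambda>p. \<bar>G' p\<bar>) ` {a..b})" if "p \<in> {a..b}" for p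
    using that by (simp add: cSup_upper)
  have "norm (G v - G u) \<le> Sup ((\<lambda>p. \<bar>G' p\<bar>) ` {a..b}) * norm (v - u)"
    using assms(3,4) G'_le
    by (intro field_differentiable_bound[where S="{a..b}"])
      (auto intro: has_field_derivative_at_within G_deriv)
  then show ?thesis by simp
qed

lemma periodic_plus_of_int:
  fixes g :: "real \<Rightarrow> 'a"
  assumes "\<And>x. g (x + 1) = g x"
  shows "g (x + of_int k) = g x"
proof -
  interpret periodic_fun_simple' g by standard (fact assms)
  show ?thesis by (rule plus_of_int)
qed

lemma periodic_in_range:
  fixes \<phi> :: "real \<Rightarrow> real"
  assumes "\<And>x. \<phi> (x + 1) = \<phi> x" "continuous_on {0..1} \<phi>"
  shows "\<phi> x \<in> {Inf (\<phi> ` {0..1}) .. Sup (\<phi> ` {0..1})}"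
proof -
  have "\<phi> x = \<phi> (x - of_int \<lfloor>x\<rfloor>)"
    using periodic_plus_of_int[of \<phi> "x - of_int \<lfloor>x\<rfloor>" "\<lfloor>x\<rfloor>", OF assms(1)] by simp
  moreover have "x - of_int \<lfloor>x\<rfloor> \<in> {0..1}"
    using floor_correct[of x] by (simp add: algebra_simps)
  moreover have "bounded (\<phi> ` {0..1})"
    by (intro compact_imp_bounded compact_continuous_image assms(2) compact_Icc)
  ultimately show ?thesis
    by (auto intro!: cInf_lower cSup_upper bounded_imp_bdd_above bounded_imp_bdd_below)
qed

lemma DERIV_ge_neg_mult_imp_le_exp:
  fixes g d :: "real \<Rightarrow> real"
  assumes "s \<le> t"
    and g_deriv: "\<And>u. u \<in> {s..t} \<Longrightarrow> (g has_real_derivative d u) (at u)"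
    and d_ge: "\<And>u. u \<in> {s..t} \<Longrightarrow> - K * g u \<le> d u"
  shows "g s \<le> g t * exp (K * (t - s))"
proof -
  have "g s * exp (K * s) \<le> g t * exp (K * t)"
  proof (rule DERIV_nonneg_imp_nondecreasing[OF \<open>s \<le> t\<close>])
    fix u assume "s \<le> u" "u \<le> t"
    then have "((\<lambda>u. g u * exp (K * u)) has_real_derivative (d u + K * g u) * exp (K * u)) (at u)"
      by (auto intro!: derivative_eq_intros g_deriv simp: algebra_simps)
    moreover have "0 \<le> (d u + K * g u) * exp (K * u)"
      using d_ge[of u] \<open>s \<le> u\<close> \<open>u \<le> t\<close> by simp
    ultimately show "\<exists>y. ((\<lambda>u. g u * exp (K * u)) has_real_derivative y) (at u) \<and> 0 \<le> y"
      by blast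
  qed
  then show ?thesis
    by (simp add: exp_diff right_diff_distrib field_simps)
qed

lemma positive_propagates_forward:
  fixes g d :: "real \<Rightarrow> real"
  assumes g_deriv: "\<And>u. (g has_real_derivative d u) (at u)"
    and d_ge: "\<And>u. 0 \<le> g u \<Longrightarrow> - L * g u \<le> d u"
    and "0 < g s" "s \<le> t"
  shows "0 < g t"
proof (rule ccontr)
  assume "\<not> 0 < g t"
  have g_cont: "isCont g u" for u
    using g_deriv by (rule DERIV_isCont)
  define Z where "Z = {u \<in> {s..t}. g u = 0}"
  have "Z \<noteq> {}"
    using IVT2[of g t 0 s] \<open>\<not> 0 < g t\<close> \<open>0 < g s\<close> \<open>s \<le> t\<close> g_cont
    by (auto simp: Z_def)
  moreover have "bdd_below Z" by (auto simp: Z_def)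
  moreover have "closed Z"
    unfolding Z_def using continuous_closed_preimage_constant[of "{s..t}" g 0]
    by (simp add: continuous_at_imp_continuous_on g_cont)
  ultimately have "Inf Z \<in> Z"
    by (rule closed_contains_Inf)
  define z where "z = Inf Z"
  have "z \<in> Z" using \<open>Inf Z \<in> Z\<close> by (simp add: z_def)
  have "0 \<le> g u" if u: "u \<in> {s..z}" for u
  proof (rule ccontr)
    assume "\<not> 0 \<le> g u"
    then obtain w where "s \<le> w" "w \<le> u" "g w = 0"
      using IVT2[of g u 0 s] \<open>0 < g s\<close> u g_cont by auto
    then have "w \<in> Z" using u \<open>z \<in> Z\<close> by (auto simp: Z_def)
    then have "z \<le> w" unfolding z_def using \<open>bdd_below Z\<close> by (rule cInf_lower)
    then have "w = u" using \<open>w \<le> u\<close> u by simp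
    then show False using \<open>g w = 0\<close> \<open>\<not> 0 \<le> g u\<close> by simp
  qed
  then have "g s \<le> g z * exp (L * (z - s))"
    using \<open>z \<in> Z\<close> g_deriv d_ge
    by (intro DERIV_ge_neg_mult_imp_le_exp[of s z g d L]) (auto simp: Z_def)
  then show False using \<open>z \<in> Z\<close> \<open>0 < g s\<close> by (simp add: Z_def)
qed

lemma periodic_positive_forward:
  fixes g d :: "real \<Rightarrow> real"
  assumes g_per: "\<And>x. g (x + 1) = g x"
    and g_deriv: "\<And>u. (g has_real_derivative d u) (at u)"
    and d_ge: "\<And>u. 0 \<le> g u \<Longrightarrow> - L * g u \<le> d u"
    and "0 < g s"
  shows "0 < g x"
proof -
  have "s \<le> x + of_int \<lceil>s - x\<rceil>"
    using le_of_int_ceiling[of "s - x"] by linarith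
  with g_deriv d_ge \<open>0 < g s\<close> have "0 < g (x + of_int \<lceil>s - x\<rceil>)"
    by (rule positive_propagates_forward)
  then show ?thesis by (simp add: periodic_plus_of_int[of g, OF g_per])
qed

lemma periodic_positive:
  fixes g d :: "real \<Rightarrow> real"
  assumes g_per: "\<And>x. g (x + 1) = g x"
    and g_deriv: "\<And>u. (g has_real_derivative d u) (at u)"
    and d_near: "\<And>u. \<bar>d u - c\<bar> \<le> L * \<bar>g u\<bar>"
    and "0 < g s"
  shows "0 < g x"
proof (cases "0 \<le> c")
  case True
  have "- L * g u \<le> d u" if "0 \<le> g u" for u
    using d_near[of u] that True by (simp add: abs_le_iff)
  then show ?thesis
    by (rule periodic_positive_forward[OF g_per g_deriv _ \<open>0 < g s\<close>])
next
  case False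
  have "0 < g (- (- x))"
  proof (rule periodic_positive_forward[where g = "\<lambda>u. g (- u)" and d = "\<lambda>u. - d (- u)"])
    show "g (- (x + 1)) = g (- x)" for x
      using g_per[of "- x - 1"] by simp
    show "((\<lambda>u. g (- u)) has_real_derivative - d (- u)) (at u)" for u
      using g_deriv[of "- u"] by (simp add: DERIV_mirror)
    show "- L * g (- u) \<le> - d (- u)" if "0 \<le> g (- u)" for u
      using d_near[of "- u"] that False by (simp add: abs_le_iff)
    show "0 < g (- (- s))" using \<open>0 < g s\<close> by simp
  qed
  then show ?thesis by simp
qed

lemma periodic_harnack_forward:
  fixes g d :: "real \<Rightarrow> real"
  assumes g_per: "\<And>x. g (x + 1) = g x"
    and g_deriv: "\<And>u. (g has_real_derivative d u) (at u)"
    and g_pos: "\<And>u. 0 < g u"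
    and d_ge: "\<And>u. - K * g u \<le> d u"
    and "0 \<le> K"
  shows "g x \<le> g z * exp K"
proof -
  define z' where "z' = z + of_int \<lceil>x - z\<rceil>"
  have "x \<le> z'" "z' \<le> x + 1" unfolding z'_def by linarith+
  have "g x \<le> g z' * exp (K * (z' - x))"
    using \<open>x \<le> z'\<close> g_deriv d_ge by (rule DERIV_ge_neg_mult_imp_le_exp)
  also have "\<dots> \<le> g z' * exp K"
    using \<open>0 \<le> K\<close> \<open>z' \<le> x + 1\<close> g_pos[of z'] by (simp add: mult_left_le)
  finally show ?thesis by (simp add: z'_def periodic_plus_of_int[of g, OF g_per])
qed

lemma periodic_harnack:
  fixes g d :: "real \<Rightarrow> real"
  assumes g_per: "\<And>x. g (x + 1) = g x"
    and g_deriv: "\<And>u. (g has_real_derivative d u) (at u)"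
    and g_pos: "\<And>u. 0 < g u"
    and d_near: "\<And>u. \<bar>d u - c\<bar> \<le> K * g u"
  shows "g x \<le> g z * exp K"
proof -
  have "0 \<le> K"
    using d_near[of 0] g_pos[of 0] by (meson abs_ge_zero order_trans zero_le_mult_iff not_le)
  show ?thesis
  proof (cases "0 \<le> c")
    case True
    have "- K * g u \<le> d u" for u
      using d_near[of u] True by (simp add: abs_le_iff)
    then show ?thesis
      by (rule periodic_harnack_forward[OF g_per g_deriv g_pos _ \<open>0 \<le> K\<close>])
  next
    case False
    have "g (- (- x)) \<le> g (- (- z)) * exp K"
    proof (rule periodic_harnack_forward[where g = "\<lambda>u. g (- u)" and d = "\<lambda>u. - d (- u)"])
      show "g (- (x + 1)) = g (- x)" for x
        using g_per[of "- x - 1"] by simp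
      show "((\<lambda>u. g (- u)) has_real_derivative - d (- u)) (at u)" for u
        using g_deriv[of "- u"] by (simp add: DERIV_mirror)
      show "- K * g (- u) \<le> - d (- u)" for u
        using d_near[of "- u"] False by (simp add: abs_le_iff)
    qed (use g_pos \<open>0 \<le> K\<close> in auto)
    then show ?thesis by simp
  qed
qed

lemma bounds_of_harnack:
  fixes g :: "'a \<Rightarrow> real"
  assumes "\<And>x z. g x \<le> g z * exp K"
  shows "g \<xi> * exp (- K) \<le> g x \<and> g x \<le> g \<xi> * exp K"
proof
  have "g \<xi> \<le> g x * exp K" by (rule assms)
  then show "g \<xi> * exp (- K) \<le> g x" by (simp add: exp_minus field_simps)
qed (rule assms)

theorem lemma4p4:
  fixes G G' V :: "real \<Rightarrow> real"
    and f :: "real \<Rightarrow> real \<Rightarrow> real"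
    and Hbar :: "real \<Rightarrow> real"
    and \<theta>1 \<theta>2 :: real
  assumes G_deriv: "\<And>p. (G has_real_derivative G' p) (at p)"
    and G'_cont: "continuous_on UNIV G'"
    and G_coercive: "filterlim G at_top at_top" "filterlim G at_top at_bot"
    and V_lip: "\<exists>L. L-lipschitz_on UNIV V"
    and V_per: "\<And>x. V (x + 1) = V x"
    and f_per: "\<And>\<theta> x. f \<theta> (x + 1) = f \<theta> x"
    and f_C1: "\<And>\<theta>. continuous_on UNIV (deriv (f \<theta>))"
    and f_ode: "\<And>\<theta> x. (f \<theta> has_real_derivative (Hbar \<theta> - G (f \<theta> x) - V x)) (at x)"
    and f_int: "\<And>\<theta>. integral {0..1} (f \<theta>) = \<theta>"
    and lt: "\<theta>1 < \<theta>2"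
  shows "\<forall>x. (\<theta>2 - \<theta>1) * exp (- K1 G' f \<theta>1 \<theta>2) \<le> f \<theta>2 x - f \<theta>1 x
            \<and> f \<theta>2 x - f \<theta>1 x \<le> (\<theta>2 - \<theta>1) * exp (K1 G' f \<theta>1 \<theta>2)"
proof -
  define g where "g x = f \<theta>2 x - f \<theta>1 x" for x
  define D where "D x = G (f \<theta>2 x) - G (f \<theta>1 x)" for x
  define c where "c = Hbar \<theta>2 - Hbar \<theta>1"
  have f_cont: "continuous_on S (f \<theta>)" for S \<theta>
    using f_ode
    by (meson DERIV_isCont continuous_at_imp_continuous_on continuous_on_subset subset_UNIV)
  have f_range: "f \<theta> x \<in> {Inf (f \<theta> ` {0..1}) .. Sup (f \<theta> ` {0..1})}" for \<theta> x
    using f_per f_cont by (rule periodic_in_range)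
  have g_per: "g (x + 1) = g x" for x
    using f_per by (simp add: g_def)
  have g_deriv: "(g has_real_derivative c - D x) (at x)" for x
    unfolding g_def D_def c_def by (rule DERIV_diff[OF f_ode f_ode, THEN DERIV_cong]) simp
  have "integral {0..1} g = \<theta>2 - \<theta>1"
    using f_int integral_diff[OF integrable_continuous_interval integrable_continuous_interval,
        OF f_cont f_cont]
    by (simp add: g_def[abs_def])
  moreover have "continuous_on {0..1} g"
    unfolding g_def[abs_def] by (intro continuous_intros f_cont)
  ultimately obtain \<xi> where g_\<xi>: "g \<xi> = \<theta>2 - \<theta>1"
    using mean_value_integral[of 0 1 g] by auto
  have G_lip: "\<bar>G q - G p\<bar> \<le> Sup ((\<lambda>r. \<bar>G' r\<bar>) ` {a..b}) * \<bar>q - p\<bar>"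
    if "p \<in> {a..b}" "q \<in> {a..b}" for a b p q
    using that by (intro abs_diff_le_Sup_abs_deriv G_deriv continuous_on_subset[OF G'_cont]) auto
  have g_pos: "0 < g x" for x
  proof (rule periodic_positive[OF g_per g_deriv])
    let ?lo = "min (Inf (f \<theta>1 ` {0..1})) (Inf (f \<theta>2 ` {0..1}))"
    let ?hi = "max (Sup (f \<theta>1 ` {0..1})) (Sup (f \<theta>2 ` {0..1}))"
    show "\<bar>(c - D u) - c\<bar> \<le> Sup ((\<lambda>p. \<bar>G' p\<bar>) ` {?lo..?hi}) * \<bar>g u\<bar>" for u
      using G_lip[where a = ?lo and b = ?hi and p = "f \<theta>1 u" and q = "f \<theta>2 u"]
        f_range[of \<theta>1 u] f_range[of \<theta>2 u]
      by (auto simp: D_def g_def abs_minus_commute min_le_iff_disj le_max_iff_disj)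
    show "0 < g \<xi>" using g_\<xi> lt by simp
  qed
  have D_le: "\<bar>(c - D u) - c\<bar> \<le> K1 G' f \<theta>1 \<theta>2 * g u" for u
    using G_lip[where a = "Inf (f \<theta>1 ` {0..1})" and b = "Sup (f \<theta>2 ` {0..1})"
        and p = "f \<theta>1 u" and q = "f \<theta>2 u"]
      f_range[of \<theta>1 u] f_range[of \<theta>2 u] g_pos[of u]
    by (simp add: K1_def D_def g_def abs_minus_commute)
  have "g x \<le> g z * exp (K1 G' f \<theta>1 \<theta>2)" for x z
    using g_per g_deriv g_pos D_le by (rule periodic_harnack)
  then have "g \<xi> * exp (- K1 G' f \<theta>1 \<theta>2) \<le> g x \<and> g x \<le> g \<xi> * exp (K1 G' f \<theta>1 \<theta>2)"
    for x
    by (rule bounds_of_harnack)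
  then show ?thesis
    using g_\<xi> by (simp add: g_def)
qed

end
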